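(* Let $q\in(0,1)$, $\beta<1$ real, $z\in\mathbb{C}\setminus\{0\}$ with $1+z^2\ne0$, and suppose $\beta(1+z^2)=q^2+z^2$. Then for all $n\in\mathbb{N}_0$, \[ p_n^{(q,\beta)}(z+z^{-1};q)=\frac{(q^2;q)_n}{z^n\left((q^2+z^2)/(1+z^2);q\right)_n}. \]
   Context: $(a;q)_n:=\prod_{j=0}^{n-1}(1-aq^j)$. The monic polynomials $p_n^{(\alpha,\beta)}(x;q)$ satisfy $p_{-1}=0$, $p_0=1$, $p_{n+1}(x)=xp_n(x)-\tilde\gamma_{n-1}\tilde\gamma_np_{n-1}(x)$ for $n\in\mathbb{N}_0$ with $\tilde\gamma_n=(1-\alpha q^n)/(1-\beta q^n)$; here $\alpha=q$. *)

theory Defs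
  imports "HOL-Analysis.Analysis"
begin

definition qpoch :: "complex \<Rightarrow> complex \<Rightarrow> nat \<Rightarrow> complex" where
  "qpoch a q n = (\<Prod>j<n. 1 - a * q ^ j)"

definition gtilde :: "complex \<Rightarrow> complex \<Rightarrow> complex \<Rightarrow> int \<Rightarrow> complex" where
  "gtilde \<alpha> \<beta> q n = (1 - \<alpha> * q powi n) / (1 - \<beta> * q powi n)"

text \<open>Monic polynomials p_n^{(alpha,beta)}(x;q): p_{-1}=0, p_0=1,
  p_{n+1}(x) = x p_n(x) - gtilde_{n-1} gtilde_n p_{n-1}(x).
  pp n = p_n evaluated at x, for n \<ge> 0; the term with p_{-1}=0 vanishes.\<close>
fun pp :: "complex \<Rightarrow> complex \<Rightarrow> complex \<Rightarrow> nat \<Rightarrow> complex \<Rightarrow> complex" where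
  "pp \<alpha> \<beta> q 0 x = 1"
| "pp \<alpha> \<beta> q (Suc 0) x = x"
| "pp \<alpha> \<beta> q (Suc (Suc n)) x =
     x * pp \<alpha> \<beta> q (Suc n) x
     - gtilde \<alpha> \<beta> q (int n) * gtilde \<alpha> \<beta> q (int n + 1) * pp \<alpha> \<beta> q n x"

end

theory Submission
  imports Defs
begin

text \<open>With \<open>\<alpha> = q\<close> the recurrence coefficient \<open>\<gamma>_{m-1} \<gamma>_m\<close> factorises, and the expected
  closed form \<open>f_n = (q^2;q)_n / (z^n (\<beta>;q)_n)\<close> has ratios
  \<open>f_{m+1} / f_m = (1 - q^{m+2}) / ((1 - \<beta> q^m) z)\<close>. Checking the three-term recurrence for
  \<open>f\<close> then reduces, after cancelling the common factor \<open>1 - q^{m+2}\<close>, to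
  \<open>(1 + z^2) \<beta> - z^2 = q^2\<close>, which is the hypothesis. For real \<open>\<beta> < 1\<close> and \<open>0 < q < 1\<close>
  no denominator \<open>1 - \<beta> q^j\<close> vanishes, and the hypothesis says precisely that
  \<open>(q^2 + z^2) / (1 + z^2) = \<beta>\<close>.\<close>

lemma qpoch_Suc: "qpoch a q (Suc n) = qpoch a q n * (1 - a * q ^ n)"
  by (simp add: qpoch_def)

lemma gtilde_of_nat: "gtilde \<alpha> \<beta> q (int m) = (1 - \<alpha> * q ^ m) / (1 - \<beta> * q ^ m)"
  by (simp add: gtilde_def power_int_of_nat)

lemma gtilde_of_nat_plus_one:
  "gtilde \<alpha> \<beta> q (int m + 1) = (1 - \<alpha> * q ^ Suc m) / (1 - \<beta> * q ^ Suc m)"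
proof -
  have "int m + 1 = int (Suc m)" by simp
  then show ?thesis by (simp only: gtilde_of_nat)
qed

lemma closed_form_ratio_recurrence:
  fixes q b z u :: complex
  assumes rel: "b * (1 + z^2) = q^2 + z^2" and "z \<noteq> 0"
    and "1 - b * u \<noteq> 0" "1 - b * (q * u) \<noteq> 0"
  defines "r \<equiv> \<lambda>v. (1 - q^2 * v) / ((1 - b * v) * z)"
  shows "r u * r (q * u)
       = (z + inverse z) * r u - (1 - q * u) / (1 - b * u) * ((1 - q * (q * u)) / (1 - b * (q * u)))"
proof -
  have "(z^2 + 1) * (1 - b * (q * u)) - z^2 * (1 - q * u) = 1 - q * u * (b * (1 + z^2) - z^2)"
    by (simp add: algebra_simps)
  also have "\<dots> = 1 - q^2 * (q * u)"
    using rel by (simp add: algebra_simps power2_eq_square)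
  finally have numerator_identity: "(z^2 + 1) * (1 - b * (q * u)) - z^2 * (1 - q * u) = 1 - q^2 * (q * u)" .
  define d1 d2 where "d1 = 1 - b * u" and "d2 = 1 - b * (q * u)"
  have nz: "d1 \<noteq> 0" "d2 \<noteq> 0" "z \<noteq> 0"
    using assms(2-4) by (simp_all add: d1_def d2_def)
  have ru: "r u = (1 - q^2 * u) / (d1 * z)" and rqu: "r (q * u) = (1 - q^2 * (q * u)) / (d2 * z)"
    by (simp_all add: r_def d1_def d2_def)
  have "(z + inverse z) * r u - (1 - q * u) / d1 * ((1 - q * (q * u)) / d2)
      = (1 - q^2 * u) * ((z^2 + 1) * d2 - z^2 * (1 - q * u)) / (d1 * d2 * z^2)
      \<and> r u * r (q * u) = (1 - q^2 * u) * (1 - q^2 * (q * u)) / (d1 * d2 * z^2)"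
    unfolding ru rqu using nz by (simp add: field_simps power2_eq_square)
  then show ?thesis
    by (simp add: d1_def d2_def numerator_identity)
qed

lemma pp_q_closed_form:
  fixes q b z :: complex
  assumes rel: "b * (1 + z^2) = q^2 + z^2" and z: "z \<noteq> 0" and nz: "\<And>j. 1 - b * q ^ j \<noteq> 0"
  shows "pp q b q n (z + inverse z) = qpoch (q^2) q n / (z ^ n * qpoch b q n)"
proof -
  define f where "f m = qpoch (q^2) q m / (z ^ m * qpoch b q m)" for m
  define r where "r v = (1 - q^2 * v) / ((1 - b * v) * z)" for v
  have f_Suc: "f (Suc m) = f m * r (q ^ m)" for m
    by (simp add: f_def r_def qpoch_Suc)
  have "pp q b q n (z + inverse z) = f n"
  proof (induction n rule: induct_nat_012)
    case 0
    show ?case by (simp add: f_def qpoch_def)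
  next
    case 1
    have "1 - q^2 = (1 - b) * (1 + z^2)"
      using rel by (simp add: algebra_simps)
    then have "f 1 = (1 + z^2) / z"
      using nz[of 0] by (simp add: f_def qpoch_def)
    also have "\<dots> = z + inverse z"
      using z by (simp add: field_simps power2_eq_square)
    finally show ?case by simp
  next
    case (ge2 m)
    have "pp q b q (Suc (Suc m)) (z + inverse z)
        = f m * ((z + inverse z) * r (q ^ m)
            - (1 - q * q ^ m) / (1 - b * q ^ m) * ((1 - q * q ^ Suc m) / (1 - b * q ^ Suc m)))"
      unfolding pp.simps gtilde_of_nat gtilde_of_nat_plus_one ge2.IH f_Suc
      by (simp add: algebra_simps)
    also have "\<dots> = f m * (r (q ^ m) * r (q * q ^ m))"
      using closed_form_ratio_recurrence[OF rel z nz nz[of "Suc m", unfolded power_Suc]] by (simp add: r_def)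
    also have "\<dots> = f (Suc (Suc m))"
      by (simp add: f_Suc)
    finally show ?case .
  qed
  then show ?thesis by (simp add: f_def)
qed

lemma mult_power_less_one:
  fixes \<beta> q :: real
  assumes "\<beta> < 1" "0 \<le> q" "q \<le> 1"
  shows "\<beta> * q ^ j < 1"
proof (cases "\<beta> \<le> 0")
  case True
  then show ?thesis using assms(2) by (smt (verit) mult_nonpos_nonneg zero_le_power)
next
  case False
  then have "\<beta> * q ^ j \<le> \<beta>" using assms(2,3) by (simp add: mult_left_le power_le_one)
  then show ?thesis using assms(1) by simp
qed

theorem corollary2p19:
  fixes q \<beta> :: real and z :: complex and n :: nat
  assumes "0 < q" "q < 1" "\<beta> < 1" "z \<noteq> 0" "1 + z^2 \<noteq> 0"
    and "complex_of_real \<beta> * (1 + z^2) = complex_of_real q ^ 2 + z^2"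
  shows "pp (complex_of_real q) (complex_of_real \<beta>) (complex_of_real q) n (z + inverse z)
       = qpoch (complex_of_real q ^ 2) (complex_of_real q) n
         / (z ^ n * qpoch ((complex_of_real q ^ 2 + z^2) / (1 + z^2)) (complex_of_real q) n)"
proof -
  have "1 - complex_of_real \<beta> * complex_of_real q ^ j \<noteq> 0" for j
  proof -
    have "\<beta> * q ^ j \<noteq> 1" using mult_power_less_one[of \<beta> q j] assms(1-3) by simp
    then show ?thesis by (metis eq_iff_diff_eq_0 of_real_eq_1_iff of_real_mult of_real_power)
  qed
  moreover have "(complex_of_real q ^ 2 + z^2) / (1 + z^2) = complex_of_real \<beta>"
    using assms(5,6) by (simp add: field_simps)
  ultimately show ?thesis
    using pp_q_closed_form[OF assms(6) assms(4)] by simp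
qed

end
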